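(* Let $X$ be a Hausdorff locally convex topological vector space over $\mathbb{R}$ with continuous dual $X^*$, let $V\subset X$ be compact, let $K\subset\mathbb{R}^d$ be compact, let $m\ge1$, and let $G:V\to C(K;\mathbb{R}^m)$ be continuous, where $C(K;\mathbb{R}^m)$ carries the uniform norm $\|h\|_K=\sup_{y\in K}\|h(y)\|_{\mathbb{R}^m}$. Assume $\sigma\in C(\mathbb{R})$ is a Tauber--Wiener function. Then for every $\varepsilon>0$ there exist an integer $N\ge1$, vectors $\omega_1,\dots,\omega_N\in\mathbb{R}^d$, scalars $\zeta_1,\dots,\zeta_N\in\mathbb{R}$, defining ridge functions $\phi_k(y)=\sigma(\omega_k\cdot y+\zeta_k)$, and single-hidden-layer topological neural networks $a_k:X\to\mathbb{R}^m$, $k=1,\dots,N$, such that \[ \sup_{u\in V}\ \sup_{y\in K}\Bigl\|G(u)(y)-\sum_{k=1}^N a_k(u)\,\phi_k(y)\Bigr\|_{\mathbb{R}^m}<\varepsilon . \]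
   Context: A function $\sigma:\mathbb{R}\to\mathbb{R}$ is a Tauber--Wiener function if the linear span of $\{t\mapsto\sigma(wt-\theta): w,\theta\in\mathbb{R}\}$ is dense in $C([a,b])$ (uniform norm) for every closed interval $[a,b]\subset\mathbb{R}$. A (vector-valued, single-hidden-layer) topological feedforward neural network on $X$ is a map $H:X\to\mathbb{R}^m$ of the form $H(x)=A\,\sigma(T(x))$, where $T(x)=(f_1(x)-\theta_1,\dots,f_r(x)-\theta_r)$ for some $r\ge1$, $f_i\in X^*$, $\theta_i\in\mathbb{R}$, $A\in\mathbb{R}^{m\times r}$, and $\sigma$ acts componentwise on $\mathbb{R}^r$. $\|\cdot\|_{\mathbb{R}^m}$ is any fixed norm on $\mathbb{R}^m$; $\omega\cdot y$ is the Euclidean inner product. *)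

theory Defs
  imports "HOL-Analysis.Analysis"
begin

definition tvs_axioms :: "('a::{real_vector,topological_space}) itself \<Rightarrow> bool" where
  "tvs_axioms _ \<longleftrightarrow>
     continuous_on (UNIV :: ('a \<times> 'a) set) (\<lambda>(x, y). x + y) \<and>
     continuous_on (UNIV :: (real \<times> 'a) set) (\<lambda>(c, x). c *\<^sub>R x)"

definition locally_convex_space :: "('a::{real_vector,topological_space}) itself \<Rightarrow> bool" where
  "locally_convex_space _ \<longleftrightarrow>
     (\<forall>(x::'a) U. open U \<and> x \<in> U \<longrightarrow> (\<exists>W. open W \<and> convex W \<and> x \<in> W \<and> W \<subseteq> U))"

definition continuous_dual :: "('a::{real_vector,topological_space} \<Rightarrow> real) set" where
  "continuous_dual = {f. linear f \<and> continuous_on UNIV f}"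

definition is_norm :: "('a::real_vector \<Rightarrow> real) \<Rightarrow> bool" where
  "is_norm N \<longleftrightarrow> (\<forall>x. 0 \<le> N x) \<and> (\<forall>x. N x = 0 \<longleftrightarrow> x = 0) \<and>
     (\<forall>c x. N (c *\<^sub>R x) = \<bar>c\<bar> * N x) \<and> (\<forall>x y. N (x + y) \<le> N x + N y)"

definition tauber_wiener :: "(real \<Rightarrow> real) \<Rightarrow> bool" where
  "tauber_wiener \<sigma> \<longleftrightarrow>
     (\<forall>a b f e. a \<le> b \<and> continuous_on {a..b} f \<and> e > 0 \<longrightarrow>
        (\<exists>(n::nat) (c::nat \<Rightarrow> real) (w::nat \<Rightarrow> real) (\<theta>::nat \<Rightarrow> real).
           \<forall>t\<in>{a..b}. \<bar>f t - (\<Sum>i<n. c i * \<sigma> (w i * t - \<theta> i))\<bar> < e))"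

definition topological_nn ::
  "(real \<Rightarrow> real) \<Rightarrow> ('a::{real_vector,topological_space} \<Rightarrow> real ^ 'm) \<Rightarrow> bool" where
  "topological_nn \<sigma> H \<longleftrightarrow>
     (\<exists>(r::nat) (f::nat \<Rightarrow> 'a \<Rightarrow> real) (\<theta>::nat \<Rightarrow> real) (A::'m \<Rightarrow> nat \<Rightarrow> real).
        r \<ge> 1 \<and> (\<forall>i<r. f i \<in> continuous_dual) \<and>
        H = (\<lambda>x. \<chi> j. \<Sum>i<r. A j i * \<sigma> (f i x - \<theta> i)))"

end

(*
  By Hahn--Banach applied to the Minkowski gauge of a convex neighbourhood of 0, the
  continuous dual of a Hausdorff locally convex space separates points.  Hence the
  functions (u, y) |-> exp (f u) * exp (omega . y) with f in X* and omega in R^d span a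
  point-separating algebra containing the constants, which by Stone--Weierstrass is
  dense in C(V x K).  A single Tauber--Wiener expansion P of exp on a large interval
  turns exp (f u) * exp (omega . y) into P (f u) * P (omega . y), i.e. a sum of ridge
  functions sigma (w omega . y - theta) times one-layer networks in f u.  Since G is
  jointly continuous on V x K, every coordinate of G is such a uniform limit, and the
  coordinates are reassembled along the standard basis of R^m.
*)
theory Submission
  imports Defs
begin

section \<open>Hahn--Banach for sublinear functionals\<close>

definition sublinear :: "('a::real_vector \<Rightarrow> real) \<Rightarrow> bool" where
  "sublinear p \<longleftrightarrow> (\<forall>x y. p (x + y) \<le> p x + p y) \<and> (\<forall>c x. 0 < c \<longrightarrow> p (c *\<^sub>R x) = c * p x)"

lemma sublinear_add: "sublinear p \<Longrightarrow> p (x + y) \<le> p x + p y"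
  unfolding sublinear_def by blast

lemma sublinear_pos_scale: "sublinear p \<Longrightarrow> 0 < c \<Longrightarrow> p (c *\<^sub>R x) = c * p x"
  unfolding sublinear_def by blast

lemma sublinear_scale_ge:
  assumes p: "sublinear p"
  shows "t * p x \<le> p (t *\<^sub>R x)"
proof -
  have p0: "p 0 = 0" using sublinear_pos_scale[OF p, of 2 0] by simp
  consider "t > 0" | "t = 0" | "t < 0" by linarith
  then show ?thesis
  proof cases
    case 3
    have "0 = p (t *\<^sub>R x + (- t) *\<^sub>R x)" using p0 by simp
    also have "\<dots> \<le> p (t *\<^sub>R x) + p ((- t) *\<^sub>R x)" by (rule sublinear_add[OF p])
    also have "p ((- t) *\<^sub>R x) = (- t) * p x" by (rule sublinear_pos_scale[OF p]) (use 3 in simp)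
    finally show ?thesis by simp
  qed (use p0 sublinear_pos_scale[OF p] in auto)
qed

text \<open>Partial linear functionals are represented by their graphs, so that the union of
  a chain of them is again one.\<close>
definition dominated_linear_graph :: "('a::real_vector \<Rightarrow> real) \<Rightarrow> ('a \<times> real) set \<Rightarrow> bool" where
  "dominated_linear_graph p H \<longleftrightarrow>
     (0, 0) \<in> H \<and>
     (\<forall>x a b. (x, a) \<in> H \<longrightarrow> (x, b) \<in> H \<longrightarrow> a = b) \<and>
     (\<forall>x a y b. (x, a) \<in> H \<longrightarrow> (y, b) \<in> H \<longrightarrow> (x + y, a + b) \<in> H) \<and>
     (\<forall>x a c. (x, a) \<in> H \<longrightarrow> (c *\<^sub>R x, c * a) \<in> H) \<and>
     (\<forall>x a. (x, a) \<in> H \<longrightarrow> a \<le> p x)"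

lemma dominated_linear_graph_Union:
  assumes "C \<noteq> {}" and "\<And>H. H \<in> C \<Longrightarrow> dominated_linear_graph p H"
    and chain: "\<And>H H'. H \<in> C \<Longrightarrow> H' \<in> C \<Longrightarrow> H \<subseteq> H' \<or> H' \<subseteq> H"
  shows "dominated_linear_graph p (\<Union>C)"
proof -
  have common: "\<exists>H\<in>C. (x, a) \<in> H \<and> (y, b) \<in> H" if "(x, a) \<in> \<Union>C" "(y, b) \<in> \<Union>C" for x a y b
    using that chain by blast
  show ?thesis
    using assms(1,2) common unfolding dominated_linear_graph_def by (smt (verit) UnionE UnionI ex_in_conv)
qed

lemma dominated_linear_graph_line:
  assumes p: "sublinear p" and x0: "x0 \<noteq> 0"
  shows "dominated_linear_graph p (range (\<lambda>t. (t *\<^sub>R x0, t * p x0)))"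
  unfolding dominated_linear_graph_def
proof (intro conjI allI impI)
  show "(0, 0) \<in> range (\<lambda>t. (t *\<^sub>R x0, t * p x0))" by (rule range_eqI[of _ _ 0]) simp
next
  fix x a b
  assume "(x, a) \<in> range (\<lambda>t. (t *\<^sub>R x0, t * p x0))" "(x, b) \<in> range (\<lambda>t. (t *\<^sub>R x0, t * p x0))"
  then obtain s t where "(x, a) = (s *\<^sub>R x0, s * p x0)" "(x, b) = (t *\<^sub>R x0, t * p x0)" by blast
  then show "a = b" using x0 by (metis Pair_inject scaleR_cancel_right)
next
  fix x a y b
  assume "(x, a) \<in> range (\<lambda>t. (t *\<^sub>R x0, t * p x0))" "(y, b) \<in> range (\<lambda>t. (t *\<^sub>R x0, t * p x0))"
  then obtain s t where "(x, a) = (s *\<^sub>R x0, s * p x0)" "(y, b) = (t *\<^sub>R x0, t * p x0)" by blast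
  then show "(x + y, a + b) \<in> range (\<lambda>t. (t *\<^sub>R x0, t * p x0))"
    by (intro range_eqI[of _ _ "s + t"]) (simp add: scaleR_left_distrib distrib_right)
next
  fix x a c
  assume "(x, a) \<in> range (\<lambda>t. (t *\<^sub>R x0, t * p x0))"
  then obtain t where "(x, a) = (t *\<^sub>R x0, t * p x0)" by blast
  then show "(c *\<^sub>R x, c * a) \<in> range (\<lambda>t. (t *\<^sub>R x0, t * p x0))"
    by (intro range_eqI[of _ _ "c * t"]) simp
next
  fix x a
  assume "(x, a) \<in> range (\<lambda>t. (t *\<^sub>R x0, t * p x0))"
  then show "a \<le> p x" using sublinear_scale_ge[OF p] by auto
qed

lemma extension_value_exists:
  assumes p: "sublinear p" and H: "dominated_linear_graph p H"
  shows "\<exists>c. \<forall>(z, b)\<in>H. b - p (z - x1) \<le> c \<and> c \<le> p (z + x1) - b"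
proof -
  have below: "b - p (z - x1) \<le> p (z' + x1) - b'" if "(z, b) \<in> H" "(z', b') \<in> H" for z b z' b'
  proof -
    have "b + b' \<le> p (z + z')"
      using H that unfolding dominated_linear_graph_def by blast
    also have "\<dots> \<le> p (z - x1) + p (z' + x1)"
      using sublinear_add[OF p, of "z - x1" "z' + x1"] by simp
    finally show ?thesis by simp
  qed
  define L where "L = {b - p (z - x1) | z b. (z, b) \<in> H}"
  have "(0, 0) \<in> H" using H unfolding dominated_linear_graph_def by blast
  then have "L \<noteq> {}" "bdd_above L"
    using below unfolding L_def bdd_above_def by blast+
  then have "\<forall>(z, b)\<in>H. b - p (z - x1) \<le> Sup L \<and> Sup L \<le> p (z + x1) - b"
    using below unfolding L_def by (auto intro!: cSup_upper cSup_least)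
  then show ?thesis by blast
qed

lemma extension_coordinate_unique:
  assumes H: "dominated_linear_graph p H" and x1: "\<forall>a. (x1, a) \<notin> H"
    and "(z1, b1) \<in> H" "(z2, b2) \<in> H" "z1 + t1 *\<^sub>R x1 = z2 + t2 *\<^sub>R x1"
  shows "t1 = t2"
proof (rule ccontr)
  assume "t1 \<noteq> t2"
  then have "x1 = (1 / (t1 - t2)) *\<^sub>R ((t1 - t2) *\<^sub>R x1)" by simp
  also have "(t1 - t2) *\<^sub>R x1 = z2 - z1"
    using assms(5) by (simp add: algebra_simps)
  finally have "x1 = (1 / (t1 - t2)) *\<^sub>R (z2 - z1)" .
  moreover have "(z2 - z1, b2 - b1) \<in> H"
    using H assms(3,4) unfolding dominated_linear_graph_def
    by (metis (no_types) diff_conv_add_uminus mult_minus1 scaleR_minus1_left)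
  ultimately have "(x1, (1 / (t1 - t2)) * (b2 - b1)) \<in> H"
    using H unfolding dominated_linear_graph_def by metis
  then show False using x1 by blast
qed

lemma extension_dominated:
  assumes p: "sublinear p" and H: "dominated_linear_graph p H"
    and c: "\<forall>(z, b)\<in>H. b - p (z - x1) \<le> c \<and> c \<le> p (z + x1) - b" and zb: "(z, b) \<in> H"
  shows "b + t * c \<le> p (z + t *\<^sub>R x1)"
proof -
  have scaled: "((1 / s) *\<^sub>R z, (1 / s) * b) \<in> H" for s
    using H zb unfolding dominated_linear_graph_def by blast
  consider "t = 0" | "t > 0" | "t < 0" by linarith
  then show ?thesis
  proof cases
    case 1
    then show ?thesis using H zb unfolding dominated_linear_graph_def by simp
  next
    case 2
    have "c \<le> p ((1 / t) *\<^sub>R z + x1) - (1 / t) * b" using c scaled[of t] by blast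
    then have "b + t * c \<le> t * p ((1 / t) *\<^sub>R z + x1)" using 2 by (simp add: field_simps)
    also have "\<dots> = p (t *\<^sub>R ((1 / t) *\<^sub>R z + x1))" using sublinear_pos_scale[OF p 2] by simp
    also have "t *\<^sub>R ((1 / t) *\<^sub>R z + x1) = z + t *\<^sub>R x1" using 2 by (simp add: algebra_simps)
    finally show ?thesis .
  next
    case 3
    then have "- t > 0" by simp
    have "(1 / - t) * b - p ((1 / - t) *\<^sub>R z - x1) \<le> c" using c scaled[of "- t"] by blast
    then have "b + t * c \<le> (- t) * p ((1 / - t) *\<^sub>R z - x1)" using 3 by (simp add: field_simps)
    also have "\<dots> = p ((- t) *\<^sub>R ((1 / - t) *\<^sub>R z - x1))"
      using sublinear_pos_scale[OF p \<open>- t > 0\<close>] by simp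
    also have "(- t) *\<^sub>R ((1 / - t) *\<^sub>R z - x1) = z + t *\<^sub>R x1" using 3 by (simp add: algebra_simps)
    finally show ?thesis .
  qed
qed

lemma dominated_linear_graph_extension:
  assumes p: "sublinear p" and H: "dominated_linear_graph p H" and x1: "\<forall>a. (x1, a) \<notin> H"
    and c: "\<forall>(z, b)\<in>H. b - p (z - x1) \<le> c \<and> c \<le> p (z + x1) - b"
  shows "dominated_linear_graph p {(z + t *\<^sub>R x1, b + t * c) | z b t. (z, b) \<in> H}"
proof -
  define H' where "H' = {(z + t *\<^sub>R x1, b + t * c) | z b t. (z, b) \<in> H}"
  have mem: "(z + t *\<^sub>R x1, b + t * c) \<in> H'" if "(z, b) \<in> H" for z b t
    unfolding H'_def using that by blast
  show ?thesis
    unfolding H'_def[symmetric] dominated_linear_graph_def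
  proof (intro conjI allI impI)
    show "(0, 0) \<in> H'" using H mem[of 0 0 0] unfolding dominated_linear_graph_def by simp
  next
    fix x a b assume "(x, a) \<in> H'" "(x, b) \<in> H'"
    then obtain z1 b1 t1 z2 b2 t2 where h: "(z1, b1) \<in> H" "(z2, b2) \<in> H"
      "x = z1 + t1 *\<^sub>R x1" "x = z2 + t2 *\<^sub>R x1" "a = b1 + t1 * c" "b = b2 + t2 * c"
      unfolding H'_def by blast
    then have "t1 = t2" using extension_coordinate_unique[OF H x1, of z1 b1 z2 b2 t1 t2] by simp
    with h have "b1 = b2" using H unfolding dominated_linear_graph_def by auto
    with h \<open>t1 = t2\<close> show "a = b" by simp
  next
    fix x a y b assume "(x, a) \<in> H'" "(y, b) \<in> H'"
    then obtain z1 b1 t1 z2 b2 t2 where h: "(z1, b1) \<in> H" "(z2, b2) \<in> H"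
      "x = z1 + t1 *\<^sub>R x1" "y = z2 + t2 *\<^sub>R x1" "a = b1 + t1 * c" "b = b2 + t2 * c"
      unfolding H'_def by blast
    moreover have "(z1 + z2, b1 + b2) \<in> H" using H h(1,2) unfolding dominated_linear_graph_def by blast
    ultimately show "(x + y, a + b) \<in> H'"
      using mem[of "z1 + z2" "b1 + b2" "t1 + t2"] by (simp add: algebra_simps)
  next
    fix x a r assume "(x, a) \<in> H'"
    then obtain z b t where h: "(z, b) \<in> H" "x = z + t *\<^sub>R x1" "a = b + t * c"
      unfolding H'_def by blast
    moreover have "(r *\<^sub>R z, r * b) \<in> H" using H h(1) unfolding dominated_linear_graph_def by blast
    ultimately show "(r *\<^sub>R x, r * a) \<in> H'"
      using mem[of "r *\<^sub>R z" "r * b" "r * t"] by (simp add: algebra_simps)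
  next
    fix x a assume "(x, a) \<in> H'"
    then show "a \<le> p x"
      unfolding H'_def using extension_dominated[OF p H c] by blast
  qed
qed

lemma dominated_linear_graph_extend:
  assumes p: "sublinear p" and H: "dominated_linear_graph p H" and x1: "\<forall>a. (x1, a) \<notin> H"
  shows "\<exists>H'. dominated_linear_graph p H' \<and> H \<subseteq> H' \<and> (\<exists>a. (x1, a) \<in> H')"
proof -
  obtain c where c: "\<forall>(z, b)\<in>H. b - p (z - x1) \<le> c \<and> c \<le> p (z + x1) - b"
    using extension_value_exists[OF p H] by blast
  let ?H' = "{(z + t *\<^sub>R x1, b + t * c) | z b t. (z, b) \<in> H}"
  have "H \<subseteq> ?H'" by (force intro: exI[of _ 0])
  moreover have "(x1, c) \<in> ?H'"
    using H unfolding dominated_linear_graph_def by (force intro: exI[of _ 1])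
  ultimately show ?thesis using dominated_linear_graph_extension[OF p H x1 c] by blast
qed

theorem Hahn_Banach_sublinear:
  assumes p: "sublinear p" and x0: "x0 \<noteq> 0"
  shows "\<exists>f. linear f \<and> (\<forall>x. f x \<le> p x) \<and> f x0 = p x0"
proof -
  define A where "A = {H. dominated_linear_graph p H \<and> (x0, p x0) \<in> H}"
  have "\<exists>M\<in>A. \<forall>X\<in>A. M \<subseteq> X \<longrightarrow> X = M"
  proof (rule subset_Zorn_nonempty)
    have "(x0, p x0) \<in> range (\<lambda>t. (t *\<^sub>R x0, t * p x0))" by (rule range_eqI[of _ _ 1]) simp
    then show "A \<noteq> {}" unfolding A_def using dominated_linear_graph_line[OF p x0] by blast
  next
    fix C assume "C \<noteq> {}" "subset.chain A C"
    then show "\<Union>C \<in> A"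
      using dominated_linear_graph_Union[of C p] unfolding A_def subset.chain_def by blast
  qed
  then obtain M where M: "dominated_linear_graph p M" "(x0, p x0) \<in> M"
    and maximal: "\<And>X. dominated_linear_graph p X \<Longrightarrow> M \<subseteq> X \<Longrightarrow> X = M"
    unfolding A_def by blast
  have total: "\<exists>a. (x, a) \<in> M" for x
    using dominated_linear_graph_extend[OF p M(1), of x] maximal by blast
  define f where "f x = (THE a. (x, a) \<in> M)" for x
  have f_eq: "f x = a" if "(x, a) \<in> M" for x a
    unfolding f_def using M(1) that by (auto simp: dominated_linear_graph_def)
  have graph: "(x, f x) \<in> M" for x
    using total f_eq by blast
  have "linear f"
  proof (rule linearI)
    show "f (x + y) = f x + f y" for x y
      using M(1) graph f_eq unfolding dominated_linear_graph_def by blast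
    show "f (r *\<^sub>R x) = r *\<^sub>R f x" for r x
      using M(1) graph f_eq unfolding dominated_linear_graph_def by simp
  qed
  moreover have "f x \<le> p x" for x
    using M(1) graph unfolding dominated_linear_graph_def by blast
  ultimately show ?thesis using f_eq M(2) by blast
qed

section \<open>The continuous dual of a locally convex space\<close>

lemma tvs_continuous_on_scaleR_left:
  assumes "tvs_axioms TYPE('a::{real_vector,topological_space})"
  shows "continuous_on UNIV (\<lambda>c. c *\<^sub>R (x::'a))"
proof -
  have scale: "continuous_on UNIV (\<lambda>(c, x::'a). c *\<^sub>R x)"
    using assms unfolding tvs_axioms_def by blast
  have "continuous_on UNIV (\<lambda>c. (\<lambda>(c, x::'a). c *\<^sub>R x) (c, x))"
    by (rule continuous_on_compose2[OF scale]) (intro continuous_intros, simp)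
  then show ?thesis by simp
qed

lemma tvs_continuous_on_affine:
  assumes "tvs_axioms TYPE('a::{real_vector,topological_space})"
  shows "continuous_on UNIV (\<lambda>y::'a. c *\<^sub>R (y - x))"
proof -
  have add: "continuous_on UNIV (\<lambda>(x::'a, y). x + y)"
    and scale: "continuous_on UNIV (\<lambda>(c, x::'a). c *\<^sub>R x)"
    using assms unfolding tvs_axioms_def by blast+
  have "continuous_on UNIV (\<lambda>y. (\<lambda>(x::'a, y). x + y) (y, - x))"
    by (rule continuous_on_compose2[OF add]) (intro continuous_intros, simp)
  then have translate: "continuous_on UNIV (\<lambda>y::'a. y - x)" by simp
  have "continuous_on UNIV (\<lambda>y. (\<lambda>(c, x::'a). c *\<^sub>R x) (c, y - x))"
    by (rule continuous_on_compose2[OF scale]) (intro continuous_intros translate, simp)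
  then show ?thesis by simp
qed

lemma tvs_open_absorbing:
  assumes "tvs_axioms TYPE('a::{real_vector,topological_space})" and "open W" "0 \<in> W"
  shows "\<exists>t>0. inverse t *\<^sub>R (x::'a) \<in> W"
proof -
  have "open ((\<lambda>c. c *\<^sub>R x) -` W)"
    using open_vimage[OF \<open>open W\<close> tvs_continuous_on_scaleR_left[OF assms(1)]] .
  moreover have "0 \<in> (\<lambda>c. c *\<^sub>R x) -` W" using \<open>0 \<in> W\<close> by simp
  ultimately obtain d where "d > 0" "ball 0 d \<subseteq> (\<lambda>c. c *\<^sub>R x) -` W"
    using open_contains_ball by blast
  moreover have "d / 2 \<in> ball 0 d" using \<open>d > 0\<close> by simp
  ultimately have "(d / 2) *\<^sub>R x \<in> W" by blast
  then show ?thesis using \<open>d > 0\<close> by (intro exI[of _ "2 / d"]) simp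
qed

definition minkowski_gauge :: "'a::real_vector set \<Rightarrow> 'a \<Rightarrow> real" where
  "minkowski_gauge W x = Inf {t. 0 < t \<and> inverse t *\<^sub>R x \<in> W}"

context
  fixes W :: "'a::real_vector set"
  assumes W_convex: "convex W" and W_zero: "0 \<in> W"
    and W_absorbing: "\<And>x. \<exists>t>0. inverse t *\<^sub>R x \<in> W"
begin

lemma minkowski_gauge_le: "0 < t \<Longrightarrow> inverse t *\<^sub>R x \<in> W \<Longrightarrow> minkowski_gauge W x \<le> t"
  unfolding minkowski_gauge_def by (rule cInf_lower) (auto intro: bdd_belowI[of _ 0])

lemma minkowski_gauge_nonneg: "0 \<le> minkowski_gauge W x"
  unfolding minkowski_gauge_def using W_absorbing[of x] by (intro cInf_greatest) auto

lemma minkowski_gauge_less_imp_mem: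
  assumes "minkowski_gauge W x < s"
  shows "0 < s \<and> inverse s *\<^sub>R x \<in> W"
proof -
  obtain t where t: "0 < t" "inverse t *\<^sub>R x \<in> W" "t < s"
    using cInf_lessD[of "{t. 0 < t \<and> inverse t *\<^sub>R x \<in> W}" s] W_absorbing[of x] assms
    unfolding minkowski_gauge_def by auto
  then have "(t / s) *\<^sub>R (inverse t *\<^sub>R x) + (1 - t / s) *\<^sub>R 0 \<in> W"
    by (intro convexD[OF W_convex _ W_zero]) auto
  moreover have "(t / s) * inverse t = inverse s" using t by (simp add: field_simps)
  ultimately have "inverse s *\<^sub>R x \<in> W"
    by (simp only: scaleR_scaleR scaleR_zero_right add_0_right)
  then show ?thesis using t by simp
qed

lemma minkowski_gauge_le_1: "x \<in> W \<Longrightarrow> minkowski_gauge W x \<le> 1"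
  using minkowski_gauge_le[of 1] by simp

lemma minkowski_gauge_ge_1: "x \<notin> W \<Longrightarrow> 1 \<le> minkowski_gauge W x"
  using minkowski_gauge_less_imp_mem[of x 1] by force

lemma minkowski_gauge_add: "minkowski_gauge W (x + y) \<le> minkowski_gauge W x + minkowski_gauge W y"
proof (rule field_le_epsilon)
  fix e :: real assume "0 < e"
  define s where "s = minkowski_gauge W x + e / 2"
  define t where "t = minkowski_gauge W y + e / 2"
  have s: "0 < s" "inverse s *\<^sub>R x \<in> W" and t: "0 < t" "inverse t *\<^sub>R y \<in> W"
    using minkowski_gauge_less_imp_mem minkowski_gauge_nonneg \<open>0 < e\<close>
    unfolding s_def t_def by (smt (verit) half_gt_zero)+
  have "(s / (s + t)) *\<^sub>R (inverse s *\<^sub>R x) + (t / (s + t)) *\<^sub>R (inverse t *\<^sub>R y) \<in> W"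
    using s t by (intro convexD[OF W_convex]) (auto simp: add_divide_distrib[symmetric])
  also have "(s / (s + t)) *\<^sub>R (inverse s *\<^sub>R x) + (t / (s + t)) *\<^sub>R (inverse t *\<^sub>R y) =
      inverse (s + t) *\<^sub>R (x + y)"
    using s t by (simp add: field_simps scaleR_add_right)
  finally have "minkowski_gauge W (x + y) \<le> s + t"
    using s t by (intro minkowski_gauge_le) auto
  then show "minkowski_gauge W (x + y) \<le> minkowski_gauge W x + minkowski_gauge W y + e"
    unfolding s_def t_def by simp
qed

lemma minkowski_gauge_scale_le:
  assumes "0 < c"
  shows "minkowski_gauge W (c *\<^sub>R x) \<le> c * minkowski_gauge W x"
proof (rule field_le_epsilon)
  fix e :: real assume "0 < e"
  define s where "s = minkowski_gauge W x + e / c"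
  have s: "0 < s" "inverse s *\<^sub>R x \<in> W"
    using minkowski_gauge_less_imp_mem minkowski_gauge_nonneg \<open>0 < e\<close> assms
    unfolding s_def by (smt (verit) divide_pos_pos)+
  moreover have "inverse (c * s) * c = inverse s" using assms by (simp add: field_simps)
  ultimately have "inverse (c * s) *\<^sub>R (c *\<^sub>R x) \<in> W"
    by (simp only: scaleR_scaleR)
  then have "minkowski_gauge W (c *\<^sub>R x) \<le> c * s"
    using minkowski_gauge_le[of "c * s"] assms s(1) by simp
  moreover have "c * s = c * minkowski_gauge W x + e"
    using assms unfolding s_def by (simp add: distrib_left)
  ultimately show "minkowski_gauge W (c *\<^sub>R x) \<le> c * minkowski_gauge W x + e"
    by linarith
qed

lemma sublinear_minkowski_gauge: "sublinear (minkowski_gauge W)"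
  unfolding sublinear_def
proof (intro conjI allI impI minkowski_gauge_add)
  fix c :: real and x assume "0 < c"
  have "c * minkowski_gauge W x = c * minkowski_gauge W (inverse c *\<^sub>R (c *\<^sub>R x))"
    using \<open>0 < c\<close> by simp
  also have "\<dots> \<le> minkowski_gauge W (c *\<^sub>R x)"
    using minkowski_gauge_scale_le[of "inverse c" "c *\<^sub>R x"] \<open>0 < c\<close> by (simp add: field_simps)
  finally show "minkowski_gauge W (c *\<^sub>R x) = c * minkowski_gauge W x"
    using minkowski_gauge_scale_le[OF \<open>0 < c\<close>, of x] by linarith
qed

end

lemma tvs_linear_continuous_if_bounded_above:
  fixes f :: "'a::{real_vector,topological_space} \<Rightarrow> real"
  assumes tvs: "tvs_axioms TYPE('a)" and f: "linear f"
    and W: "open W" "0 \<in> W" and bounded: "\<And>x. x \<in> W \<Longrightarrow> f x \<le> 1"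
  shows "continuous_on UNIV f"
  unfolding continuous_on_topological
proof (intro ballI allI impI)
  fix x B assume "open B" "f x \<in> B"
  then obtain e where e: "e > 0" "ball (f x) e \<subseteq> B" using open_contains_ball by blast
  define A where "A = (\<lambda>y. (2 / e) *\<^sub>R (y - x)) -` W \<inter> (\<lambda>y. (- 2 / e) *\<^sub>R (y - x)) -` W"
  have "open A"
    unfolding A_def by (intro open_Int open_vimage W(1) tvs_continuous_on_affine[OF tvs])
  moreover have "x \<in> A" using W(2) by (simp add: A_def)
  moreover have "f y \<in> B" if "y \<in> A" for y
  proof -
    have "(2 / e) *\<^sub>R (y - x) \<in> W" "(- 2 / e) *\<^sub>R (y - x) \<in> W"
      using that unfolding A_def by simp_all
    then have "f ((2 / e) *\<^sub>R (y - x)) \<le> 1" "f ((- 2 / e) *\<^sub>R (y - x)) \<le> 1"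
      using bounded by blast+
    then have "(2 / e) * (f y - f x) \<le> 1" "(- 2 / e) * (f y - f x) \<le> 1"
      unfolding linear_cmul[OF f] linear_diff[OF f] real_scaleR_def .
    then have "f y - f x \<le> e / 2" "f x - f y \<le> e / 2"
      using e(1) by (simp_all add: field_simps)
    then have "dist (f y) (f x) < e"
      using e(1) by (simp add: dist_real_def abs_less_iff)
    then show ?thesis using e(2) by (auto simp: dist_commute)
  qed
  ultimately show "\<exists>A. open A \<and> x \<in> A \<and> (\<forall>y\<in>UNIV. y \<in> A \<longrightarrow> f y \<in> B)" by blast
qed

theorem continuous_dual_separates_points:
  fixes x0 :: "'a::{real_vector,t2_space}"
  assumes tvs: "tvs_axioms TYPE('a)" and lc: "locally_convex_space TYPE('a)" and x0: "x0 \<noteq> 0"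
  shows "\<exists>f\<in>continuous_dual. f x0 \<noteq> 0"
proof -
  obtain U where "open U" "0 \<in> U" "x0 \<notin> U" using t1_space[of 0 x0] x0 by metis
  then obtain W where W: "open W" "convex W" "0 \<in> W" and "x0 \<notin> W"
    using lc unfolding locally_convex_space_def by blast
  note gauge_hyps = W(2,3) tvs_open_absorbing[OF tvs W(1,3)]
  obtain f where f: "linear f" "\<And>x. f x \<le> minkowski_gauge W x" "f x0 = minkowski_gauge W x0"
    using Hahn_Banach_sublinear[OF sublinear_minkowski_gauge[OF gauge_hyps] x0] by blast
  have "continuous_on UNIV f"
    using tvs_linear_continuous_if_bounded_above[OF tvs f(1) W(1,3)]
      f(2) minkowski_gauge_le_1[OF gauge_hyps] order_trans by blast
  moreover have "f x0 \<noteq> 0"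
    using f(3) minkowski_gauge_ge_1[OF gauge_hyps \<open>x0 \<notin> W\<close>] by simp
  ultimately show ?thesis using f(1) unfolding continuous_dual_def by blast
qed

lemma continuous_dual_zero: "(\<lambda>x. 0) \<in> continuous_dual"
  unfolding continuous_dual_def by (auto intro: linearI)

lemma continuous_dual_scale: "f \<in> continuous_dual \<Longrightarrow> (\<lambda>x. c * f x) \<in> continuous_dual"
  unfolding continuous_dual_def
  by (auto intro!: linearI continuous_intros simp: linear_add linear_scale algebra_simps)

lemma continuous_dual_add:
  "f \<in> continuous_dual \<Longrightarrow> g \<in> continuous_dual \<Longrightarrow> (\<lambda>x. f x + g x) \<in> continuous_dual"
  unfolding continuous_dual_def
  by (auto intro!: linearI continuous_intros simp: linear_add linear_scale algebra_simps)

section \<open>Norms on \<open>\<real>\<^sup>m\<close> and joint continuity\<close>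

context
  fixes nrm :: "real ^ 'm \<Rightarrow> real"
  assumes nrm: "is_norm nrm"
begin

lemma is_norm_zero: "nrm 0 = 0"
  using nrm unfolding is_norm_def by blast

lemma is_norm_scale: "nrm (c *\<^sub>R x) = \<bar>c\<bar> * nrm x"
  using nrm unfolding is_norm_def by blast

lemma is_norm_sum_le: "finite J \<Longrightarrow> nrm (\<Sum>j\<in>J. v j) \<le> (\<Sum>j\<in>J. nrm (v j))"
proof (induction J rule: finite_induct)
  case (insert j J)
  have "nrm (v j + sum v J) \<le> nrm (v j) + nrm (sum v J)"
    using nrm unfolding is_norm_def by blast
  then show ?case using insert by simp
qed (simp add: is_norm_zero)

lemma is_norm_axis_sum_le:
  assumes "\<And>j. \<bar>d j\<bar> \<le> D"
  shows "nrm (\<Sum>j\<in>UNIV. d j *\<^sub>R axis j 1) \<le> D * (\<Sum>j\<in>UNIV. nrm (axis j 1))"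
proof -
  have "nrm (\<Sum>j\<in>UNIV. d j *\<^sub>R axis j 1) \<le> (\<Sum>j\<in>UNIV. nrm (d j *\<^sub>R axis j 1))"
    by (rule is_norm_sum_le) simp
  also have "\<dots> = (\<Sum>j\<in>UNIV. \<bar>d j\<bar> * nrm (axis j 1))"
    by (simp add: is_norm_scale)
  also have "\<dots> \<le> (\<Sum>j\<in>UNIV. D * nrm (axis j 1))"
    using assms nrm unfolding is_norm_def by (intro sum_mono mult_right_mono) auto
  finally show ?thesis by (simp add: sum_distrib_left)
qed

lemma is_norm_continuous: "continuous_on UNIV nrm"
proof (rule convex_on_continuous)
  show "convex_on UNIV nrm"
  proof (rule convex_onI)
    fix t :: real and x y assume "0 < t" "t < 1"
    then show "nrm ((1 - t) *\<^sub>R x + t *\<^sub>R y) \<le> (1 - t) * nrm x + t * nrm y"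
      using nrm unfolding is_norm_def by (smt (verit))
  qed simp
qed simp

lemma is_norm_dominates_norm: "\<exists>C>0. \<forall>x. norm x \<le> C * nrm x"
proof -
  have "sphere (0::real ^ 'm) 1 \<noteq> {}"
    using norm_axis_1 by (metis mem_sphere_0 ex_in_conv)
  then obtain x0 where x0: "x0 \<in> sphere 0 1" and min: "\<And>x. x \<in> sphere 0 1 \<Longrightarrow> nrm x0 \<le> nrm x"
    using continuous_attains_inf[OF compact_sphere _ continuous_on_subset[OF is_norm_continuous]]
    by blast
  have pos: "nrm x0 > 0"
    using nrm x0 unfolding is_norm_def by (metis less_eq_real_def mem_sphere_0 norm_zero zero_neq_one)
  have "norm x \<le> (1 / nrm x0) * nrm x" for x
  proof (cases "x = 0")
    case False
    have "nrm x0 \<le> nrm ((1 / norm x) *\<^sub>R x)" using False by (intro min) simp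
    also have "\<dots> = nrm x / norm x" using nrm unfolding is_norm_def by simp
    finally show ?thesis using False pos by (simp add: field_simps)
  qed (simp add: is_norm_zero)
  then show ?thesis using pos by (intro exI[of _ "1 / nrm x0"]) simp
qed

end

lemma continuous_on_Times_if_uniform_in_second:
  fixes G :: "'a::topological_space \<Rightarrow> 'b::metric_space \<Rightarrow> 'c::metric_space"
  assumes cont: "\<And>u. u \<in> V \<Longrightarrow> continuous_on K (G u)"
    and unif: "\<And>u e. u \<in> V \<Longrightarrow> e > 0 \<Longrightarrow>
      \<exists>U. open U \<and> u \<in> U \<and> (\<forall>v\<in>V \<inter> U. \<forall>y\<in>K. dist (G v y) (G u y) < e)"
  shows "continuous_on (V \<times> K) (\<lambda>z. G (fst z) (snd z))"
  unfolding continuous_on_topological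
proof (intro ballI allI impI)
  fix z B assume "z \<in> V \<times> K" "open B" "G (fst z) (snd z) \<in> B"
  then obtain u y e where z: "z = (u, y)" "u \<in> V" "y \<in> K" and e: "e > 0" "ball (G u y) e \<subseteq> B"
    by (metis mem_Times_iff open_contains_ball prod.collapse)
  obtain U where U: "open U" "u \<in> U" "\<forall>v\<in>V \<inter> U. \<forall>y\<in>K. dist (G v y) (G u y) < e / 2"
    using unif[OF z(2), of "e / 2"] e(1) by auto
  obtain d where d: "d > 0" "\<forall>y'\<in>K. dist y' y < d \<longrightarrow> dist (G u y') (G u y) < e / 2"
    using cont[OF z(2)] z(3) e(1) unfolding continuous_on_iff by (metis half_gt_zero)
  have "G v y' \<in> B" if "(v, y') \<in> V \<times> K" "(v, y') \<in> U \<times> ball y d" for v y'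
  proof -
    have "dist (G v y') (G u y) \<le> dist (G v y') (G u y') + dist (G u y') (G u y)"
      by (rule dist_triangle)
    also have "\<dots> < e" using U(3) d(2) that by (force simp: dist_commute)
    finally show ?thesis using e(2) by (auto simp: dist_commute)
  qed
  moreover have "open (U \<times> ball y d)" "z \<in> U \<times> ball y d"
    using U d z by (auto intro: open_Times)
  ultimately show "\<exists>A. open A \<and> z \<in> A \<and> (\<forall>w\<in>V \<times> K. w \<in> A \<longrightarrow> G (fst w) (snd w) \<in> B)"
    by (metis prod.collapse)
qed

lemma operator_continuous_on_Times:
  fixes G :: "'a::topological_space \<Rightarrow> 'b::metric_space \<Rightarrow> real ^ 'm"
  assumes nrm: "is_norm nrm" and cont: "\<forall>u\<in>V. continuous_on K (G u)"
    and unif: "\<forall>u\<in>V. \<forall>e>0. \<exists>U. open U \<and> u \<in> U \<and> (\<forall>v\<in>V \<inter> U. \<forall>y\<in>K. nrm (G v y - G u y) < e)"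
  shows "continuous_on (V \<times> K) (\<lambda>z. G (fst z) (snd z))"
proof -
  obtain C where C: "C > 0" "\<And>x. norm x \<le> C * nrm x"
    using is_norm_dominates_norm[OF nrm] by blast
  show ?thesis
  proof (rule continuous_on_Times_if_uniform_in_second)
    fix u and e :: real assume "u \<in> V" "e > 0"
    then obtain U where U: "open U" "u \<in> U" "\<forall>v\<in>V \<inter> U. \<forall>y\<in>K. nrm (G v y - G u y) < e / C"
      using unif C(1) by (meson divide_pos_pos)
    have "dist (G v y) (G u y) < e" if "v \<in> V \<inter> U" "y \<in> K" for v y
    proof -
      have "dist (G v y) (G u y) \<le> C * nrm (G v y - G u y)" using C(2) by (simp add: dist_norm)
      also have "\<dots> < C * (e / C)" using U(3) that C(1) by (intro mult_strict_left_mono) auto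
      finally show ?thesis using C(1) by simp
    qed
    then show "\<exists>U. open U \<and> u \<in> U \<and> (\<forall>v\<in>V \<inter> U. \<forall>y\<in>K. dist (G v y) (G u y) < e)"
      using U(1,2) by blast
  qed (use cont in blast)
qed

section \<open>Networks and ridge expansions\<close>

lemma sum_lessThan_append:
  "(\<Sum>k<m + n. if k < m then g k else h (k - m)) = (\<Sum>k<m. g k) + (\<Sum>k<(n::nat). h k)"
proof -
  have "(\<Sum>k<m + n. f k) = (\<Sum>k<m. f k) + (\<Sum>k<n. f (m + k))" for f
    by (induction n) (simp_all add: add.assoc)
  from this[of "\<lambda>k. if k < m then g k else h (k - m)"] show ?thesis by simp
qed

definition scalar_networks :: "(real \<Rightarrow> real) \<Rightarrow> ('a::{real_vector,topological_space} \<Rightarrow> real) set" where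
  "scalar_networks \<sigma> =
     {(\<lambda>x. \<Sum>i<(r::nat). A i * \<sigma> (f i x - \<theta> i)) | r f \<theta> A. \<forall>i<r. f i \<in> continuous_dual}"

lemma scalar_networksI:
  "\<forall>i<r. f i \<in> continuous_dual \<Longrightarrow>
    (\<lambda>x. \<Sum>i<(r::nat). A i * \<sigma> (f i x - \<theta> i)) \<in> scalar_networks \<sigma>"
  unfolding scalar_networks_def by blast

lemma scalar_networks_scale:
  assumes "b \<in> scalar_networks \<sigma>"
  shows "(\<lambda>x. c * b x) \<in> scalar_networks \<sigma>"
proof -
  obtain r :: nat and f \<theta> A where h: "\<forall>i<r. f i \<in> continuous_dual" "b = (\<lambda>x. \<Sum>i<r. A i * \<sigma> (f i x - \<theta> i))"
    using assms unfolding scalar_networks_def by blast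
  then have "(\<lambda>x. c * b x) = (\<lambda>x. \<Sum>i<r. (c * A i) * \<sigma> (f i x - \<theta> i))"
    by (simp add: sum_distrib_left mult.assoc)
  then show ?thesis using scalar_networksI[OF h(1), where A = "\<lambda>i. c * A i"] by simp
qed

lemma scalar_networks_compose_dual:
  assumes "f \<in> continuous_dual"
  shows "(\<lambda>x. \<Sum>i<(n::nat). c i * \<sigma> (w i * f x - \<theta> i)) \<in> scalar_networks \<sigma>"
  using scalar_networksI[where f = "\<lambda>i x. w i * f x"] continuous_dual_scale[OF assms] by simp

lemma topological_nn_zero: "topological_nn \<sigma> (\<lambda>x::'a::{real_vector,topological_space}. 0)"
  unfolding topological_nn_def
  by (rule exI[of _ 1], rule exI[of _ "\<lambda>i x. 0"], rule exI[of _ "\<lambda>i. 0"], rule exI[of _ "\<lambda>j i. 0"])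
     (simp add: continuous_dual_zero vec_eq_iff fun_eq_iff)

lemma topological_nn_scalar_network_axis:
  assumes "b \<in> scalar_networks \<sigma>"
  shows "topological_nn \<sigma> (\<lambda>x. b x *\<^sub>R axis j 1)"
proof -
  obtain r :: nat and f \<theta> A where h: "\<forall>i<r. f i \<in> continuous_dual"
    "b = (\<lambda>x. \<Sum>i<r. A i * \<sigma> (f i x - \<theta> i))"
    using assms unfolding scalar_networks_def by blast
  \<comment> \<open>A dummy neuron with output weight 0 guarantees \<open>r \<ge> 1\<close>.\<close>
  define f' where "f' i = (if i < r then f i else (\<lambda>x. 0))" for i
  define A' where "A' j' i = (if i < r \<and> j' = j then A i else 0)" for j' i
  have "b x *\<^sub>R axis j 1 = (\<chi> j'. \<Sum>i<Suc r. A' j' i * \<sigma> (f' i x - \<theta> i))" for x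
  proof -
    have "(\<Sum>i<Suc r. A' j' i * \<sigma> (f' i x - \<theta> i)) = (if j' = j then b x else 0)" for j'
      unfolding h(2) by (simp add: A'_def f'_def)
    then show ?thesis by (simp add: vec_eq_iff axis_def)
  qed
  moreover have "\<forall>i<Suc r. f' i \<in> continuous_dual"
    using h(1) continuous_dual_zero unfolding f'_def by auto
  ultimately show ?thesis
    unfolding topological_nn_def
    by (intro exI[of _ "Suc r"] exI[of _ f'] exI[of _ \<theta>] exI[of _ A']) auto
qed

definition ridge_expansion ::
  "(real \<Rightarrow> real) \<Rightarrow> ('a \<Rightarrow> 'b::real_vector) set \<Rightarrow> ('a \<Rightarrow> real ^ 'd \<Rightarrow> 'b) \<Rightarrow> bool" where
  "ridge_expansion \<sigma> B F \<longleftrightarrow>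
     (\<exists>(N::nat) \<omega> \<zeta> b. (\<forall>k<N. b k \<in> B) \<and> F = (\<lambda>u y. \<Sum>k<N. \<sigma> (\<omega> k \<bullet> y + \<zeta> k) *\<^sub>R b k u))"

lemma ridge_expansionI:
  "\<forall>k<N. b k \<in> B \<Longrightarrow>
    ridge_expansion \<sigma> B (\<lambda>u y. \<Sum>k<(N::nat). \<sigma> (\<omega> k \<bullet> y + \<zeta> k) *\<^sub>R b k u)"
  unfolding ridge_expansion_def by blast

lemma ridge_expansion_zero: "ridge_expansion \<sigma> B (\<lambda>u y. 0)"
  unfolding ridge_expansion_def by (rule exI[of _ 0]) simp

lemma ridge_expansion_add:
  assumes "ridge_expansion \<sigma> B F1" "ridge_expansion \<sigma> B F2"
  shows "ridge_expansion \<sigma> B (\<lambda>u y. F1 u y + F2 u y)"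
proof -
  obtain N1 :: nat and \<omega>1 \<zeta>1 b1 where 1: "\<forall>k<N1. b1 k \<in> B"
    "F1 = (\<lambda>u y. \<Sum>k<N1. \<sigma> (\<omega>1 k \<bullet> y + \<zeta>1 k) *\<^sub>R b1 k u)"
    using assms(1) unfolding ridge_expansion_def by blast
  obtain N2 :: nat and \<omega>2 \<zeta>2 b2 where 2: "\<forall>k<N2. b2 k \<in> B"
    "F2 = (\<lambda>u y. \<Sum>k<N2. \<sigma> (\<omega>2 k \<bullet> y + \<zeta>2 k) *\<^sub>R b2 k u)"
    using assms(2) unfolding ridge_expansion_def by blast
  let ?app = "\<lambda>g h k. if k < N1 then g k else h (k - N1)"
  have "(\<lambda>u y. F1 u y + F2 u y) =
      (\<lambda>u y. \<Sum>k<N1 + N2. \<sigma> (?app \<omega>1 \<omega>2 k \<bullet> y + ?app \<zeta>1 \<zeta>2 k) *\<^sub>R ?app b1 b2 k u)"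
    unfolding 1 2 sum_lessThan_append[symmetric] by (intro ext sum.cong) auto
  moreover have "\<forall>k<N1 + N2. ?app b1 b2 k \<in> B" using 1 2 by auto
  ultimately show ?thesis
    using ridge_expansionI[where \<omega> = "?app \<omega>1 \<omega>2" and \<zeta> = "?app \<zeta>1 \<zeta>2"] by simp
qed

lemma ridge_expansion_sum:
  "finite J \<Longrightarrow> (\<And>j. j \<in> J \<Longrightarrow> ridge_expansion \<sigma> B (F j)) \<Longrightarrow>
    ridge_expansion \<sigma> B (\<lambda>u y. \<Sum>j\<in>J. F j u y)"
  by (induction J rule: finite_induct) (auto intro: ridge_expansion_zero ridge_expansion_add)

lemma ridge_expansion_compose_linear:
  assumes "linear L" and B: "\<And>b. b \<in> B \<Longrightarrow> (\<lambda>u. L (b u)) \<in> B'" and "ridge_expansion \<sigma> B F"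
  shows "ridge_expansion \<sigma> B' (\<lambda>u y. L (F u y))"
proof -
  obtain N :: nat and \<omega> \<zeta> b where h: "\<forall>k<N. b k \<in> B" "F = (\<lambda>u y. \<Sum>k<N. \<sigma> (\<omega> k \<bullet> y + \<zeta> k) *\<^sub>R b k u)"
    using assms(3) unfolding ridge_expansion_def by blast
  have "(\<lambda>u y. L (F u y)) = (\<lambda>u y. \<Sum>k<N. \<sigma> (\<omega> k \<bullet> y + \<zeta> k) *\<^sub>R L (b k u))"
    unfolding h(2) by (simp add: linear_sum[OF \<open>linear L\<close>] linear_cmul[OF \<open>linear L\<close>])
  moreover have "\<forall>k<N. (\<lambda>u. L (b k u)) \<in> B'" using h(1) B by blast
  ultimately show ?thesis using ridge_expansionI[where b = "\<lambda>k u. L (b k u)"] by simp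
qed

lemma ridge_expansion_nonempty:
  assumes "ridge_expansion \<sigma> B F" and "(\<lambda>u. 0) \<in> B"
  shows "\<exists>(N::nat) \<omega> \<zeta> b. N \<ge> 1 \<and> (\<forall>k<N. b k \<in> B) \<and>
    F = (\<lambda>u y. \<Sum>k<N. \<sigma> (\<omega> k \<bullet> y + \<zeta> k) *\<^sub>R b k u)"
proof -
  obtain N :: nat and \<omega> \<zeta> b where h: "\<forall>k<N. b k \<in> B" "F = (\<lambda>u y. \<Sum>k<N. \<sigma> (\<omega> k \<bullet> y + \<zeta> k) *\<^sub>R b k u)"
    using assms(1) unfolding ridge_expansion_def by blast
  define b' where "b' = b(N := (\<lambda>u. 0))"
  have "F = (\<lambda>u y. \<Sum>k<Suc N. \<sigma> (\<omega> k \<bullet> y + \<zeta> k) *\<^sub>R b' k u)"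
    unfolding h(2) b'_def by (intro ext) (simp add: lessThan_Suc)
  moreover have "\<forall>k<Suc N. b' k \<in> B" using h(1) assms(2) unfolding b'_def by (simp add: less_Suc_eq)
  ultimately show ?thesis by (intro exI[of _ "Suc N"]) auto
qed

section \<open>Uniform approximation by ridge expansions\<close>

definition ridge_approximable ::
  "(real \<Rightarrow> real) \<Rightarrow> 'a set \<Rightarrow> (real ^ 'd) set \<Rightarrow>
    ('a::{real_vector,topological_space} \<Rightarrow> real ^ 'd \<Rightarrow> real) \<Rightarrow> bool" where
  "ridge_approximable \<sigma> V K h \<longleftrightarrow>
     (\<forall>e>0. \<exists>R. ridge_expansion \<sigma> (scalar_networks \<sigma>) R \<and> (\<forall>u\<in>V. \<forall>y\<in>K. \<bar>h u y - R u y\<bar> < e))"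

lemma ridge_approximable_limit:
  assumes "\<And>e. e > 0 \<Longrightarrow> \<exists>h'. ridge_approximable \<sigma> V K h' \<and> (\<forall>u\<in>V. \<forall>y\<in>K. \<bar>h u y - h' u y\<bar> < e)"
  shows "ridge_approximable \<sigma> V K h"
  unfolding ridge_approximable_def
proof (intro allI impI)
  fix e :: real assume "e > 0"
  then obtain h' where h': "ridge_approximable \<sigma> V K h'" "\<forall>u\<in>V. \<forall>y\<in>K. \<bar>h u y - h' u y\<bar> < e / 2"
    using assms[of "e / 2"] by auto
  obtain R where R: "ridge_expansion \<sigma> (scalar_networks \<sigma>) R"
    "\<forall>u\<in>V. \<forall>y\<in>K. \<bar>h' u y - R u y\<bar> < e / 2"
    using h'(1) \<open>e > 0\<close> unfolding ridge_approximable_def by (meson half_gt_zero)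
  have "\<bar>h u y - R u y\<bar> < e" if "u \<in> V" "y \<in> K" for u y
  proof -
    have "\<bar>h u y - h' u y\<bar> < e / 2" "\<bar>h' u y - R u y\<bar> < e / 2" using h'(2) R(2) that by auto
    then show ?thesis by linarith
  qed
  with R(1) show "\<exists>R. ridge_expansion \<sigma> (scalar_networks \<sigma>) R \<and> (\<forall>u\<in>V. \<forall>y\<in>K. \<bar>h u y - R u y\<bar> < e)"
    by blast
qed

lemma ridge_approximable_add:
  assumes "ridge_approximable \<sigma> V K h1" "ridge_approximable \<sigma> V K h2"
  shows "ridge_approximable \<sigma> V K (\<lambda>u y. h1 u y + h2 u y)"
  unfolding ridge_approximable_def
proof (intro allI impI)
  fix e :: real assume "e > 0"
  then have "e / 2 > 0" by simp
  then obtain R1 R2 where R: "ridge_expansion \<sigma> (scalar_networks \<sigma>) R1" "ridge_expansion \<sigma> (scalar_networks \<sigma>) R2"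
    "\<forall>u\<in>V. \<forall>y\<in>K. \<bar>h1 u y - R1 u y\<bar> < e / 2" "\<forall>u\<in>V. \<forall>y\<in>K. \<bar>h2 u y - R2 u y\<bar> < e / 2"
    using assms unfolding ridge_approximable_def by blast
  have "\<forall>u\<in>V. \<forall>y\<in>K. \<bar>h1 u y + h2 u y - (R1 u y + R2 u y)\<bar> < e"
  proof (intro ballI)
    fix u y assume "u \<in> V" "y \<in> K"
    then have "\<bar>h1 u y - R1 u y\<bar> < e / 2" "\<bar>h2 u y - R2 u y\<bar> < e / 2" using R(3,4) by auto
    then show "\<bar>h1 u y + h2 u y - (R1 u y + R2 u y)\<bar> < e" by linarith
  qed
  then show "\<exists>R. ridge_expansion \<sigma> (scalar_networks \<sigma>) R \<and>
      (\<forall>u\<in>V. \<forall>y\<in>K. \<bar>h1 u y + h2 u y - R u y\<bar> < e)"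
    using ridge_expansion_add[OF R(1,2)] by blast
qed

lemma ridge_approximable_scale:
  assumes "ridge_approximable \<sigma> V K h"
  shows "ridge_approximable \<sigma> V K (\<lambda>u y. c * h u y)"
  unfolding ridge_approximable_def
proof (intro allI impI)
  fix e :: real assume "e > 0"
  then have "e / (\<bar>c\<bar> + 1) > 0" by simp
  then obtain R where R: "ridge_expansion \<sigma> (scalar_networks \<sigma>) R"
    "\<forall>u\<in>V. \<forall>y\<in>K. \<bar>h u y - R u y\<bar> < e / (\<bar>c\<bar> + 1)"
    using assms unfolding ridge_approximable_def by blast
  have "\<bar>c * h u y - c * R u y\<bar> < e" if "u \<in> V" "y \<in> K" for u y
  proof -
    have "\<bar>c * h u y - c * R u y\<bar> = \<bar>c\<bar> * \<bar>h u y - R u y\<bar>" by (simp add: abs_mult[symmetric] algebra_simps)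
    also have "\<dots> \<le> (\<bar>c\<bar> + 1) * \<bar>h u y - R u y\<bar>" by (simp add: mult_right_mono)
    also have "\<dots> < e" using R(2) that by (simp add: field_simps)
    finally show ?thesis .
  qed
  moreover have "ridge_expansion \<sigma> (scalar_networks \<sigma>) (\<lambda>u y. c * R u y)"
    using ridge_expansion_compose_linear[where L = "\<lambda>t. c * t", OF _ scalar_networks_scale R(1)]
    by simp
  ultimately show "\<exists>R. ridge_expansion \<sigma> (scalar_networks \<sigma>) R \<and> (\<forall>u\<in>V. \<forall>y\<in>K. \<bar>c * h u y - R u y\<bar> < e)"
    by blast
qed

lemma exp_mult_approx_le:
  fixes s t p q B \<delta> :: real
  assumes "\<bar>s\<bar> \<le> B" "\<bar>t\<bar> \<le> B" and err: "\<bar>exp s - p\<bar> \<le> \<delta>" "\<bar>exp t - q\<bar> \<le> \<delta>" and "\<delta> \<le> 1"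
  shows "\<bar>exp s * exp t - p * q\<bar> \<le> \<delta> * (2 * exp B + 1)"
proof -
  have exp_le: "exp s \<le> exp B" "exp t \<le> exp B" using assms(1,2) by (simp_all add: abs_le_iff)
  then have p_le: "\<bar>p\<bar> \<le> exp B + 1"
    using err(1) \<open>\<delta> \<le> 1\<close> exp_gt_zero[of s] unfolding abs_le_iff by linarith
  have "exp s * exp t - p * q = (exp s - p) * exp t + p * (exp t - q)" by (simp add: algebra_simps)
  then have "\<bar>exp s * exp t - p * q\<bar> \<le> \<bar>exp s - p\<bar> * exp t + \<bar>p\<bar> * \<bar>exp t - q\<bar>"
    by (metis abs_mult abs_of_pos abs_triangle_ineq exp_gt_zero)
  also have "\<dots> \<le> \<delta> * exp B + (exp B + 1) * \<delta>"
    using err exp_le p_le by (intro add_mono mult_mono) auto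
  finally show ?thesis by (simp add: algebra_simps)
qed

lemma compact_abs_bound:
  assumes "compact S" "continuous_on S g"
  obtains B :: real where "0 \<le> B" "\<And>x. x \<in> S \<Longrightarrow> \<bar>g x\<bar> \<le> B"
proof -
  obtain B where "\<forall>x\<in>S. \<bar>g x\<bar> \<le> B"
    using compact_imp_bounded[OF compact_continuous_image[OF assms(2,1)]] unfolding bounded_real by auto
  then show ?thesis using that[of "max 0 B"] by force
qed

lemma ridge_approximable_exp_mult_exp:
  fixes V :: "'a::{real_vector,topological_space} set" and K :: "(real ^ 'd) set"
  assumes tw: "tauber_wiener \<sigma>" and V: "compact V" and K: "compact K" and f: "f \<in> continuous_dual"
  shows "ridge_approximable \<sigma> V K (\<lambda>u y. exp (f u) * exp (\<omega> \<bullet> y))"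
  unfolding ridge_approximable_def
proof (intro allI impI)
  fix e :: real assume "e > 0"
  have "continuous_on V f" using f unfolding continuous_dual_def by (blast intro: continuous_on_subset)
  then obtain B1 where B1: "0 \<le> B1" "\<And>u. u \<in> V \<Longrightarrow> \<bar>f u\<bar> \<le> B1"
    using compact_abs_bound[OF V] by blast
  have "continuous_on K (\<lambda>y. \<omega> \<bullet> y)" by (intro continuous_intros)
  then obtain B2 where B2: "\<And>y. y \<in> K \<Longrightarrow> \<bar>\<omega> \<bullet> y\<bar> \<le> B2"
    using compact_abs_bound[OF K] by blast
  define B where "B = max B1 B2"
  have D: "0 < 2 * exp B + 2" using exp_gt_zero[of B] by linarith
  define \<delta> where "\<delta> = min 1 (e / (2 * exp B + 2))"
  have \<delta>: "0 < \<delta>" "\<delta> \<le> 1" "\<delta> * (2 * exp B + 1) < e"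
  proof -
    have "\<delta> * (2 * exp B + 1) \<le> e / (2 * exp B + 2) * (2 * exp B + 1)"
      unfolding \<delta>_def by (intro mult_right_mono) auto
    also have "\<dots> < e / (2 * exp B + 2) * (2 * exp B + 2)"
      using \<open>e > 0\<close> D by (intro mult_strict_left_mono divide_pos_pos) auto
    also have "\<dots> = e" using D by simp
    finally show "\<delta> * (2 * exp B + 1) < e" .
  qed (use \<open>e > 0\<close> D in \<open>auto simp: \<delta>_def\<close>)
  have "- B \<le> B" "continuous_on {- B..B} exp" using B1(1) unfolding B_def by (auto intro: continuous_intros)
  then obtain n :: nat and c w \<theta>
    where "\<forall>t\<in>{- B..B}. \<bar>exp t - (\<Sum>i<n. c i * \<sigma> (w i * t - \<theta> i))\<bar> < \<delta>"
    using tw \<delta>(1) unfolding tauber_wiener_def by blast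
  moreover define P where "P t = (\<Sum>i<n. c i * \<sigma> (w i * t - \<theta> i))" for t
  ultimately have P: "\<bar>exp t - P t\<bar> < \<delta>" if "\<bar>t\<bar> \<le> B" for t
    using that by (auto simp: abs_le_iff)
  \<comment> \<open>\<open>P (f u) * P (\<omega> \<bullet> y)\<close> is already a ridge expansion, with directions \<open>w i *\<^sub>R \<omega>\<close>.\<close>
  define R where "R u y = (\<Sum>i<n. \<sigma> ((w i *\<^sub>R \<omega>) \<bullet> y + - \<theta> i) *\<^sub>R (c i * P (f u)))" for u y
  have "ridge_expansion \<sigma> (scalar_networks \<sigma>) R"
    unfolding R_def[abs_def] P_def
    by (intro ridge_expansionI allI impI scalar_networks_scale scalar_networks_compose_dual f)
  moreover have "\<bar>exp (f u) * exp (\<omega> \<bullet> y) - R u y\<bar> < e" if "u \<in> V" "y \<in> K" for u y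
  proof -
    have bounds: "\<bar>f u\<bar> \<le> B" "\<bar>\<omega> \<bullet> y\<bar> \<le> B"
      using B1(2) B2 that unfolding B_def by force+
    have "R u y = P (f u) * P (\<omega> \<bullet> y)"
      unfolding R_def P_def by (simp add: sum_distrib_left mult_ac)
    then have "\<bar>exp (f u) * exp (\<omega> \<bullet> y) - R u y\<bar> \<le> \<delta> * (2 * exp B + 1)"
      using exp_mult_approx_le[OF bounds _ _ \<delta>(2)] P[OF bounds(1)] P[OF bounds(2)] by simp
    then show ?thesis using \<delta>(3) by linarith
  qed
  ultimately show "\<exists>R. ridge_expansion \<sigma> (scalar_networks \<sigma>) R \<and>
      (\<forall>u\<in>V. \<forall>y\<in>K. \<bar>exp (f u) * exp (\<omega> \<bullet> y) - R u y\<bar> < e)"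
    by blast
qed

inductive exp_span :: "('a::{real_vector,topological_space} \<times> (real ^ 'd) \<Rightarrow> real) \<Rightarrow> bool" where
  exp_span_exp: "f \<in> continuous_dual \<Longrightarrow> exp_span (\<lambda>z. c * exp (f (fst z)) * exp (\<omega> \<bullet> snd z))"
| exp_span_add: "exp_span h1 \<Longrightarrow> exp_span h2 \<Longrightarrow> exp_span (\<lambda>z. h1 z + h2 z)"

lemma exp_span_continuous: "exp_span h \<Longrightarrow> continuous_on UNIV h"
proof (induction rule: exp_span.induct)
  case (exp_span_exp f c \<omega>)
  then have "continuous_on UNIV f" unfolding continuous_dual_def by simp
  then have "continuous_on UNIV (\<lambda>z::'a \<times> (real ^ 'd). f (fst z))"
    by (rule continuous_on_compose2) (intro continuous_intros, simp)
  then show ?case by (intro continuous_intros)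
qed (intro continuous_intros)

lemma exp_span_const: "exp_span (\<lambda>z. c)"
  using exp_span_exp[OF continuous_dual_zero, of c 0] by simp

lemma exp_span_exp_mult:
  assumes "exp_span h" and f1: "f1 \<in> continuous_dual"
  shows "exp_span (\<lambda>z. (c1 * exp (f1 (fst z)) * exp (\<omega>1 \<bullet> snd z)) * h z)"
  using assms(1)
proof (induction rule: exp_span.induct)
  case (exp_span_exp f c \<omega>)
  have "exp_span (\<lambda>z. (c1 * c) * exp (f1 (fst z) + f (fst z)) * exp ((\<omega>1 + \<omega>) \<bullet> snd z))"
    by (rule exp_span.exp_span_exp[OF continuous_dual_add[OF f1 exp_span_exp]])
  then show ?case by (simp add: exp_add inner_add_left mult_ac)
next
  case (exp_span_add h1 h2)
  then show ?case using exp_span.exp_span_add[OF exp_span_add.IH] by (simp add: distrib_left)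
qed

lemma exp_span_mult: "exp_span h1 \<Longrightarrow> exp_span h2 \<Longrightarrow> exp_span (\<lambda>z. h1 z * h2 z)"
proof (induction h1 rule: exp_span.induct)
  case (exp_span_exp f c \<omega>)
  show ?case by (rule exp_span_exp_mult[OF exp_span_exp.prems exp_span_exp.hyps])
next
  case (exp_span_add h1 h3)
  then show ?case using exp_span.exp_span_add[OF exp_span_add.IH] by (simp add: distrib_right)
qed

lemma exp_span_separates_points:
  fixes z1 z2 :: "'a::{real_vector,t2_space} \<times> (real ^ 'd)"
  assumes tvs: "tvs_axioms TYPE('a)" and lc: "locally_convex_space TYPE('a)" and "z1 \<noteq> z2"
  shows "\<exists>h. exp_span h \<and> h z1 \<noteq> h z2"
proof (cases "fst z1 = fst z2")
  case False
  then obtain f where f: "f \<in> continuous_dual" "f (fst z1 - fst z2) \<noteq> 0"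
    using continuous_dual_separates_points[OF tvs lc] by (meson right_minus_eq)
  then have "f (fst z1) \<noteq> f (fst z2)"
    unfolding continuous_dual_def by (simp add: linear_diff)
  then show ?thesis
    using exp_span_exp[OF f(1), of 1 0] by (intro exI[of _ "\<lambda>z. exp (f (fst z))"]) simp
next
  case True
  define \<omega> where "\<omega> = snd z1 - snd z2"
  have "\<omega> \<noteq> 0" using True \<open>z1 \<noteq> z2\<close> unfolding \<omega>_def by (simp add: prod_eq_iff)
  then have "\<omega> \<bullet> snd z1 - \<omega> \<bullet> snd z2 > 0" unfolding \<omega>_def by (simp add: inner_diff_right[symmetric])
  then show ?thesis
    using exp_span_exp[OF continuous_dual_zero, of 1 \<omega>] by (intro exI[of _ "\<lambda>z. exp (\<omega> \<bullet> snd z)"]) simp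
qed

lemma ridge_approximable_exp_span:
  fixes V :: "'a::{real_vector,topological_space} set" and K :: "(real ^ 'd) set"
  assumes "tauber_wiener \<sigma>" "compact V" "compact K"
  shows "exp_span h \<Longrightarrow> ridge_approximable \<sigma> V K (\<lambda>u y. h (u, y))"
proof (induction rule: exp_span.induct)
  case (exp_span_exp f c \<omega>)
  show ?case
    using ridge_approximable_scale[OF ridge_approximable_exp_mult_exp[OF assms exp_span_exp], of c]
    by (simp add: mult.assoc)
qed (simp add: ridge_approximable_add)

theorem ridge_approximable_continuous:
  fixes V :: "'a::{real_vector,t2_space} set" and K :: "(real ^ 'd) set"
  assumes tvs: "tvs_axioms TYPE('a)" and lc: "locally_convex_space TYPE('a)"
    and tw: "tauber_wiener \<sigma>" and V: "compact V" and K: "compact K"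
    and g: "continuous_on (V \<times> K) g"
  shows "ridge_approximable \<sigma> V K (\<lambda>u y. g (u, y))"
proof (rule ridge_approximable_limit)
  fix e :: real assume "e > 0"
  have continuous: "continuous_on (V \<times> K) h" if "exp_span h" for h
    using exp_span_continuous[OF that] by (rule continuous_on_subset) simp
  have separates: "\<exists>h. exp_span h \<and> h z1 \<noteq> h z2" if "z1 \<in> V \<times> K \<and> z2 \<in> V \<times> K \<and> z1 \<noteq> z2" for z1 z2
    using exp_span_separates_points[OF tvs lc] that by blast
  have "\<exists>h. exp_span h \<and> (\<forall>z\<in>V \<times> K. \<bar>g z - h z\<bar> < e)"
    by (rule Stone_Weierstrass_HOL[OF compact_Times[OF V K] exp_span_const continuous _ _ separates g \<open>e > 0\<close>])
       (auto intro: exp_span_add exp_span_mult)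
  then show "\<exists>h'. ridge_approximable \<sigma> V K h' \<and> (\<forall>u\<in>V. \<forall>y\<in>K. \<bar>g (u, y) - h' u y\<bar> < e)"
    using ridge_approximable_exp_span[OF tw V K] by fastforce
qed

lemma ridge_expansion_approximates_componentwise:
  fixes G :: "'a::{real_vector,topological_space} \<Rightarrow> real ^ 'd \<Rightarrow> real ^ 'm"
  assumes nrm: "is_norm nrm" and approx: "\<And>j. ridge_approximable \<sigma> V K (\<lambda>u y. G u y $ j)"
    and "\<epsilon> > 0"
  shows "\<exists>F. ridge_expansion \<sigma> {a. topological_nn \<sigma> a} F \<and>
    (\<exists>c<\<epsilon>. \<forall>u\<in>V. \<forall>y\<in>K. nrm (G u y - F u y) \<le> c)"
proof -
  define S where "S = (\<Sum>j\<in>UNIV. nrm (axis j 1 :: real ^ 'm))"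
  have "S \<ge> 0" using nrm unfolding S_def is_norm_def by (simp add: sum_nonneg)
  define \<delta> where "\<delta> = \<epsilon> / (S + 1)"
  have "\<delta> > 0" using \<open>\<epsilon> > 0\<close> \<open>S \<ge> 0\<close> unfolding \<delta>_def by simp
  have "\<delta> * S < \<delta> * (S + 1)" using \<open>\<delta> > 0\<close> by simp
  also have "\<dots> = \<epsilon>" using \<open>S \<ge> 0\<close> unfolding \<delta>_def by simp
  finally have "\<delta> * S < \<epsilon>" .
  have "\<forall>j. \<exists>R. ridge_expansion \<sigma> (scalar_networks \<sigma>) R \<and> (\<forall>u\<in>V. \<forall>y\<in>K. \<bar>G u y $ j - R u y\<bar> < \<delta>)"
    using approx \<open>\<delta> > 0\<close> unfolding ridge_approximable_def by blast
  then obtain R where R: "\<And>j. ridge_expansion \<sigma> (scalar_networks \<sigma>) (R j)"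
    and R_err: "\<And>j u y. u \<in> V \<Longrightarrow> y \<in> K \<Longrightarrow> \<bar>G u y $ j - R j u y\<bar> < \<delta>"
    by metis
  define F where "F u y = (\<Sum>j\<in>UNIV. R j u y *\<^sub>R axis j (1::real))" for u y
  have "ridge_expansion \<sigma> {a. topological_nn \<sigma> a} F"
    unfolding F_def[abs_def]
    by (intro ridge_expansion_sum ridge_expansion_compose_linear[OF
          bounded_linear_scaleR_left[THEN bounded_linear.linear] _ R])
       (auto intro: topological_nn_scalar_network_axis)
  moreover have "nrm (G u y - F u y) \<le> \<delta> * S" if "u \<in> V" "y \<in> K" for u y
  proof -
    have "G u y - F u y = (\<Sum>j\<in>UNIV. (G u y $ j - R j u y) *\<^sub>R axis j 1)"
      unfolding F_def
      by (subst (1) basis_expansion[of "G u y", symmetric])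
         (simp add: sum_subtractf scaleR_left_diff_distrib scalar_mult_eq_scaleR)
    also have "nrm \<dots> \<le> \<delta> * S"
      unfolding S_def using R_err[OF that] by (intro is_norm_axis_sum_le[OF nrm] less_imp_le)
    finally show ?thesis .
  qed
  ultimately show ?thesis using \<open>\<delta> * S < \<epsilon>\<close> by blast
qed

theorem mainTheorem2:
  fixes V :: "'a::{real_vector,t2_space} set"
    and K :: "(real ^ 'd) set"
    and G :: "'a \<Rightarrow> real ^ 'd \<Rightarrow> real ^ 'm"
    and nrm :: "real ^ 'm \<Rightarrow> real"
    and \<sigma> :: "real \<Rightarrow> real"
    and \<epsilon> :: real
  assumes tvs: "tvs_axioms TYPE('a)"
    and lc: "locally_convex_space TYPE('a)"
    and V: "compact V"
    and K: "compact K"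
    and nrm: "is_norm nrm"
    and G_cont_K: "\<forall>u\<in>V. continuous_on K (G u)"
    and G_cont: "\<forall>u\<in>V. \<forall>e>0. \<exists>U. open U \<and> u \<in> U \<and>
                   (\<forall>v\<in>V \<inter> U. \<forall>y\<in>K. nrm (G v y - G u y) < e)"
    and \<sigma>_cont: "continuous_on UNIV \<sigma>"
    and \<sigma>_TW: "tauber_wiener \<sigma>"
    and \<epsilon>: "\<epsilon> > 0"
  shows "\<exists>(N::nat) (\<omega>::nat \<Rightarrow> real ^ 'd) (\<zeta>::nat \<Rightarrow> real) (a::nat \<Rightarrow> 'a \<Rightarrow> real ^ 'm).
           N \<ge> 1 \<and> (\<forall>k<N. topological_nn \<sigma> (a k)) \<and>
           (\<exists>c<\<epsilon>. \<forall>u\<in>V. \<forall>y\<in>K.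
              nrm (G u y - (\<Sum>k<N. \<sigma> (\<omega> k \<bullet> y + \<zeta> k) *\<^sub>R a k u)) \<le> c)"
proof -
  have "continuous_on (V \<times> K) (\<lambda>z. G (fst z) (snd z))"
    by (rule operator_continuous_on_Times[OF nrm G_cont_K G_cont])
  then have "ridge_approximable \<sigma> V K (\<lambda>u y. G u y $ j)" for j
    using ridge_approximable_continuous[OF tvs lc \<sigma>_TW V K, of "\<lambda>z. G (fst z) (snd z) $ j"]
    by (simp add: continuous_on_component)
  then obtain F c where F: "ridge_expansion \<sigma> {a. topological_nn \<sigma> a} F" and "c < \<epsilon>"
    and err: "\<forall>u\<in>V. \<forall>y\<in>K. nrm (G u y - F u y) \<le> c"
    using ridge_expansion_approximates_componentwise[OF nrm _ \<epsilon>] by blast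
  moreover have "(\<lambda>u. 0) \<in> {a. topological_nn \<sigma> a}" using topological_nn_zero by simp
  ultimately obtain N :: nat and \<omega> \<zeta> a where "N \<ge> 1" "\<forall>k<N. a k \<in> {a. topological_nn \<sigma> a}"
    "F = (\<lambda>u y. \<Sum>k<N. \<sigma> (\<omega> k \<bullet> y + \<zeta> k) *\<^sub>R a k u)"
    using ridge_expansion_nonempty by blast
  then show ?thesis
    using \<open>c < \<epsilon>\<close> err by (intro exI[of _ N] exI[of _ \<omega>] exI[of _ \<zeta>] exI[of _ a]) auto
qed

end
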